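(* On the trivial homogeneous $\mathrm{U}(1)$-principal bundle $P=V^{5,2}\times\mathrm{U}(1)$ over $V^{5,2}=\mathrm{SO}(5)/\mathrm{SO}(3)$ (induced by the trivial homomorphism $\mathrm{SO}(3)\to\mathrm{U}(1)$), the $\mathrm{SO}(5)$-invariant connections are exactly those corresponding to the linear maps $\beta:\mathfrak{so}(5)\to\mathfrak u(1)$ of the form $\beta=a_1\,e^1\otimes u$, $a_1\in\mathbb{R}$, where $u$ is a fixed generator of $\mathfrak u(1)\cong\mathbb{R}$. Furthermore, the curvature of such a connection lies in $\Omega^2_1$, i.e. is a constant multiple of the invariant 2-form $\omega$ corresponding to $e^{25}+e^{36}+e^{47}$, tensored with $u$.
   Context: Basis of $\mathfrak{so}(5)$ (with $E_{ij}$ the elementary $5\times5$ matrices): $e_1=E_{12}-E_{21}$, $e_2=E_{13}-E_{31}$, $e_3=E_{14}-E_{41}$, $e_4=E_{15}-E_{51}$, $e_5=E_{23}-E_{32}$, $e_6=E_{24}-E_{42}$, $e_7=E_{25}-E_{52}$, $e_8=E_{34}-E_{43}$, $e_9=E_{35}-E_{53}$, $e_{10}=E_{54}-E_{45}$; bracket = commutator. $\mathrm{SO}(3)\subset\mathrm{SO}(5)$ has Lie algebra $\mathrm{span}\{e_8,e_9,e_{10}\}$; $e^i$ dual basis. For a homomorphism $\phi:H\to K$, $G$-invariant connections on $G\times_\phi K\to G/H$ correspond bijectively to linear maps $\alpha:\mathfrak g\to\mathfrak k$ with $\alpha|_{\mathfrak h}=\phi_*$ and $\alpha\circ\mathrm{Ad}(h)=\mathrm{Ad}(\phi(h))\circ\alpha$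 for $h\in H$. The curvature is the invariant form given on $\mathfrak m=\mathrm{span}\{e_1,\dots,e_7\}$ by $F(X,Y)=[\alpha X,\alpha Y]-\alpha([X,Y])$. $\Omega^2_1$ denotes 2-forms $f\,\omega$ with $\omega=e^{25}+e^{36}+e^{47}$. *)

theory Defs
  imports "HOL-Analysis.Analysis"
begin

text \<open>Matrix indices 1..5 of the paper are mapped to the elements 0..4 of the numeral type 5.\<close>

definition idx :: "nat \<Rightarrow> 5" where
  "idx k = of_nat (k - 1)"

definition Emat :: "nat \<Rightarrow> nat \<Rightarrow> real^5^5" where
  "Emat i j = (\<chi> a b. if a = idx i \<and> b = idx j then 1 else 0)"

definition so5 :: "(real^5^5) set" where
  "so5 = {A. transpose A = - A}"

definition brk :: "real^5^5 \<Rightarrow> real^5^5 \<Rightarrow> real^5^5" where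
  "brk A B = A ** B - B ** A"

definition ebas :: "nat \<Rightarrow> real^5^5" where
  "ebas k = (if k = 1 then Emat 1 2 - Emat 2 1
       else if k = 2 then Emat 1 3 - Emat 3 1
       else if k = 3 then Emat 1 4 - Emat 4 1
       else if k = 4 then Emat 1 5 - Emat 5 1
       else if k = 5 then Emat 2 3 - Emat 3 2
       else if k = 6 then Emat 2 4 - Emat 4 2
       else if k = 7 then Emat 2 5 - Emat 5 2
       else if k = 8 then Emat 3 4 - Emat 4 3
       else if k = 9 then Emat 3 5 - Emat 5 3
       else Emat 5 4 - Emat 4 5)"

definition edual :: "nat \<Rightarrow> real^5^5 \<Rightarrow> real" where
  "edual k X = (if k = 1 then X $ idx 1 $ idx 2
       else if k = 2 then X $ idx 1 $ idx 3
       else if k = 3 then X $ idx 1 $ idx 4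
       else if k = 4 then X $ idx 1 $ idx 5
       else if k = 5 then X $ idx 2 $ idx 3
       else if k = 6 then X $ idx 2 $ idx 4
       else if k = 7 then X $ idx 2 $ idx 5
       else if k = 8 then X $ idx 3 $ idx 4
       else if k = 9 then X $ idx 3 $ idx 5
       else X $ idx 5 $ idx 4)"

definition hh :: "(real^5^5) set" where
  "hh = span {ebas 8, ebas 9, ebas 10}"

definition mm :: "(real^5^5) set" where
  "mm = span (ebas ` {1..7})"

text \<open>SO(3) inside SO(5): rotations fixing the first two coordinate axes
  (i.e. acting on coordinates 3,4,5), whose Lie algebra is span{e8,e9,e10}.\<close>
definition SO3 :: "(real^5^5) set" where
  "SO3 = {h. orthogonal_matrix h \<and> det h = 1 \<and>
              h *v axis (idx 1) 1 = axis (idx 1) 1 \<and> h *v axis (idx 2) 1 = axis (idx 2) 1}"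

definition Ad :: "real^5^5 \<Rightarrow> real^5^5 \<Rightarrow> real^5^5" where
  "Ad h X = h ** X ** matrix_inv h"

text \<open>u(1) is identified with the reals (generator u = 1); it is abelian.\<close>
definition u1_brk :: "real \<Rightarrow> real \<Rightarrow> real" where
  "u1_brk a b = 0"

definition linear_on_so5 :: "(real^5^5 \<Rightarrow> real) \<Rightarrow> bool" where
  "linear_on_so5 \<alpha> \<longleftrightarrow>
     (\<forall>X\<in>so5. \<forall>Y\<in>so5. \<alpha> (X + Y) = \<alpha> X + \<alpha> Y) \<and>
     (\<forall>c. \<forall>X\<in>so5. \<alpha> (c *\<^sub>R X) = c * \<alpha> X)"

text \<open>Wang-type data of an SO(5)-invariant connection on SO(5) \<times>_\<phi> U(1) for
  the trivial homomorphism \<phi> : SO(3) \<rightarrow> U(1): \<phi>_* = 0 and Ad(\<phi>(h)) = id.\<close>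
definition inv_conn :: "(real^5^5 \<Rightarrow> real) \<Rightarrow> bool" where
  "inv_conn \<alpha> \<longleftrightarrow>
     (\<forall>X\<in>hh. \<alpha> X = 0) \<and>
     (\<forall>h\<in>SO3. \<forall>X\<in>so5. \<alpha> (Ad h X) = \<alpha> X)"

definition curv :: "(real^5^5 \<Rightarrow> real) \<Rightarrow> real^5^5 \<Rightarrow> real^5^5 \<Rightarrow> real" where
  "curv \<alpha> X Y = u1_brk (\<alpha> X) (\<alpha> Y) - \<alpha> (brk X Y)"

definition wedge :: "nat \<Rightarrow> nat \<Rightarrow> real^5^5 \<Rightarrow> real^5^5 \<Rightarrow> real" where
  "wedge i j X Y = edual i X * edual j Y - edual j X * edual i Y"

definition omega :: "real^5^5 \<Rightarrow> real^5^5 \<Rightarrow> real" where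
  "omega X Y = wedge 2 5 X Y + wedge 3 6 X Y + wedge 4 7 X Y"

end

theory Submission
  imports Defs
begin

text \<open>
  Conjugating \<open>X \<in> so(5)\<close> by a diagonal sign matrix \<open>diag(\<sigma>)\<close> multiplies the entry
  \<open>X_ij\<close> by \<open>\<sigma>_i \<sigma>_j\<close>. The sign changes of two of the coordinates 3, 4, 5 form a Klein
  four-group inside SO(3), and averaging over it kills every entry except \<open>X_12\<close> and
  \<open>X_21\<close>: it maps \<open>X\<close> to \<open>e^1(X) e_1\<close>. Hence every Ad(SO(3))-invariant \<open>\<alpha>\<close> equals
  \<open>\<alpha>(e_1) e^1\<close>. Conversely SO(3) fixes
  the first two coordinate axes, so conjugation by it preserves \<open>X_12\<close>, and \<open>e^1\<close>
  vanishes on so(3). As u(1) is abelian the curvature is \<open>-\<alpha>([X,Y])\<close>, and for skew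
  matrices \<open>[X,Y]_12 = -(e^25 + e^36 + e^47)(X,Y)\<close>.
\<close>

lemma exhaust_5:
  fixes x :: 5
  shows "x = 0 \<or> x = 1 \<or> x = 2 \<or> x = 3 \<or> x = 4"
proof (induct x)
  case (of_int z)
  then have "z = 0 \<or> z = 1 \<or> z = 2 \<or> z = 3 \<or> z = 4" by fastforce
  then show ?case by auto
qed

lemma sum_5: "sum f (UNIV::5 set) = f 0 + f 1 + f 2 + f 3 + f 4"
proof -
  have UNIV_5: "UNIV = {0, 1, 2, 3, 4::5}"
    using exhaust_5 by auto
  show ?thesis
    unfolding UNIV_5 by (simp add: ac_simps)
qed

lemma transpose_diff: "transpose (A - B) = transpose A - transpose (B::'a::ring_1^'n^'m)"
  by (simp add: transpose_def vec_eq_iff)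

lemma matrix_mul_uminus_left: "(- A) ** B = - (A ** B :: 'a::ring_1^'n^'m)"
  by (simp add: matrix_matrix_mult_def vec_eq_iff sum_negf)

lemma matrix_mul_uminus_right: "A ** (- B) = - (A ** B :: 'a::ring_1^'n^'m)"
  by (simp add: matrix_matrix_mult_def vec_eq_iff sum_negf)

lemma transpose_zero [simp]: "transpose 0 = 0"
  by (simp add: transpose_def vec_eq_iff)

lemma transpose_add: "transpose (A + B) = transpose A + transpose (B::'a::semiring_1^'n^'m)"
  by (simp add: transpose_def vec_eq_iff)

lemma skew_matrices_subspace: "subspace {A::real^'n^'n. transpose A = - A}"
  unfolding subspace_def by (simp add: transpose_add transpose_scalar)

lemma skew_commutator:
  fixes A B :: "'a::comm_ring_1^'n^'n"
  assumes "transpose A = - A" "transpose B = - B"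
  shows "transpose (A ** B - B ** A) = - (A ** B - B ** A)"
  by (simp add: transpose_diff matrix_transpose_mul assms
      matrix_mul_uminus_left matrix_mul_uminus_right)

lemma skew_conj_transpose:
  fixes A Q :: "'a::comm_ring_1^'n^'n"
  assumes "transpose A = - A"
  shows "transpose (Q ** A ** transpose Q) = - (Q ** A ** transpose Q)"
  by (simp add: matrix_transpose_mul assms matrix_mul_assoc
      matrix_mul_uminus_left matrix_mul_uminus_right)

lemma orthogonal_matrix_inv:
  fixes Q :: "real^'n^'n"
  assumes "orthogonal_matrix Q"
  shows "matrix_inv Q = transpose Q"
proof -
  have QT: "Q ** transpose Q = mat 1" "transpose Q ** Q = mat 1"
    using assms by (auto simp: orthogonal_matrix_def)
  have "Q ** matrix_inv Q = mat 1 \<and> matrix_inv Q ** Q = mat 1"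
    unfolding matrix_inv_def by (rule someI[of _ "transpose Q"]) (use QT in blast)
  then have inv: "matrix_inv Q ** Q = mat 1" by blast
  have "matrix_inv Q = matrix_inv Q ** (Q ** transpose Q)"
    using QT by simp
  also have "\<dots> = transpose Q"
    by (simp add: matrix_mul_assoc inv)
  finally show ?thesis .
qed

lemma orthogonal_fixed_axis_row:
  fixes Q :: "real^'n^'n"
  assumes "orthogonal_matrix Q" "Q *v axis k 1 = axis k 1"
  shows "Q $ k = axis k 1"
proof -
  have "transpose Q *v axis k 1 = transpose Q *v (Q *v axis k 1)"
    using assms(2) by simp
  also have "\<dots> = axis k 1"
    using assms(1) by (simp add: matrix_vector_mul_assoc orthogonal_matrix_def)
  finally show ?thesis
    by (simp add: vec_eq_iff matrix_vector_mult_def transpose_def axis_def if_distrib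
        sum.delta cong: if_cong)
qed

lemma orthogonal_conj_fixed_entry:
  fixes Q A :: "real^'n^'n"
  assumes "orthogonal_matrix Q" "Q *v axis i 1 = axis i 1" "Q *v axis j 1 = axis j 1"
  shows "(Q ** A ** transpose Q) $ i $ j = A $ i $ j"
proof -
  have "(Q ** B) $ i = B $ i" for B :: "real^'n^'n"
    by (simp add: vec_eq_iff matrix_matrix_mult_def orthogonal_fixed_axis_row[OF assms(1,2)]
        axis_def if_distrib if_distribR sum.delta cong: if_cong)
  moreover have "(A ** transpose Q) $ i $ j = A $ i $ j"
    using orthogonal_fixed_axis_row[OF assms(1,3)]
    by (simp add: matrix_matrix_mult_def transpose_def axis_def if_distrib if_distribR
        sum.delta' cong: if_cong)
  ultimately show ?thesis
    by (simp add: matrix_mul_assoc[symmetric])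
qed

definition flip_sign :: "'n \<Rightarrow> 'n \<Rightarrow> 'n \<Rightarrow> real" where
  "flip_sign p q i = (if i = p \<or> i = q then -1 else 1)"

definition sign_flip :: "'n \<Rightarrow> 'n \<Rightarrow> real^'n^'n" where
  "sign_flip p q = (\<chi> i j. if i = j then flip_sign p q i else 0)"

lemma transpose_sign_flip [simp]: "transpose (sign_flip p q) = sign_flip p q"
  by (simp add: sign_flip_def transpose_def vec_eq_iff)

lemma sign_flip_mult_left_nth: "(sign_flip p q ** A) $ i $ j = flip_sign p q i * A $ i $ j"
  by (simp add: sign_flip_def matrix_matrix_mult_def if_distrib if_distribR sum.delta
      cong: if_cong)

lemma sign_flip_mult_right_nth: "(A ** sign_flip p q) $ i $ j = A $ i $ j * flip_sign p q j"
  by (simp add: sign_flip_def matrix_matrix_mult_def if_distrib if_distribR sum.delta'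
      cong: if_cong)

lemma orthogonal_sign_flip: "orthogonal_matrix (sign_flip p q)"
proof -
  have "sign_flip p q ** sign_flip p q = mat 1"
    by (simp add: vec_eq_iff sign_flip_mult_left_nth mat_def)
      (simp add: sign_flip_def flip_sign_def)
  then show ?thesis
    by (simp add: orthogonal_matrix_def)
qed

lemma det_sign_flip:
  assumes "p \<noteq> q"
  shows "det (sign_flip p q) = 1"
proof -
  have "det (sign_flip p q) = prod (flip_sign p q) UNIV"
    by (subst det_diagonal) (simp_all add: sign_flip_def)
  also have "\<dots> = prod (\<lambda>_. -1) {p, q} * prod (\<lambda>_. 1) (UNIV - {p, q})"
    unfolding flip_sign_def prod.If_cases[OF finite] by (simp add: Collect_disj_eq insert_commute)
  also have "\<dots> = 1"
    using assms by simp
  finally show ?thesis .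
qed

lemma sign_flip_mult_vec_nth: "(sign_flip p q *v v) $ i = flip_sign p q i * v $ i"
  by (simp add: sign_flip_def matrix_vector_mult_def if_distrib if_distribR sum.delta
      cong: if_cong)

lemma sign_flip_fixes_axis:
  assumes "k \<noteq> p" "k \<noteq> q"
  shows "sign_flip p q *v axis k 1 = axis k 1"
  using assms by (simp add: vec_eq_iff sign_flip_mult_vec_nth flip_sign_def axis_def)

lemma idx_numeral [simp]: "idx (Suc 0) = 0" "idx 2 = 1" "idx 3 = 2" "idx 4 = 3" "idx 5 = 4"
  by (simp_all add: idx_def)

lemma edual_1: "edual 1 X = X $ 0 $ 1"
  by (simp add: edual_def)

lemma ebas_1:
  "ebas 1 = (\<chi> i j. if i = 0 \<and> j = 1 then 1 else if i = 1 \<and> j = 0 then -1 else 0)"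
  by (simp add: ebas_def Emat_def vec_eq_iff)

lemma so5_skew_nth:
  assumes "X \<in> so5"
  shows "X $ j $ i = - X $ i $ j"
proof -
  have "transpose X $ j $ i = (- X) $ j $ i"
    using assms by (simp add: so5_def)
  then show ?thesis
    by (simp add: transpose_def)
qed

lemma so5_diag_nth: "X \<in> so5 \<Longrightarrow> X $ i $ i = 0"
  using so5_skew_nth[of X i i] by simp

lemma subspace_so5: "subspace so5"
  unfolding so5_def by (rule skew_matrices_subspace)

lemma ebas_1_so5: "ebas 1 \<in> so5"
  unfolding ebas_1 by (simp add: so5_def vec_eq_iff transpose_def)

lemma brk_so5: "X \<in> so5 \<Longrightarrow> Y \<in> so5 \<Longrightarrow> brk X Y \<in> so5"
  by (simp add: so5_def brk_def skew_commutator)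

lemma mm_subset_so5: "mm \<subseteq> so5"
  unfolding mm_def
  by (rule span_minimal[OF _ subspace_so5])
    (auto simp: ebas_def Emat_def so5_def transpose_def vec_eq_iff)

lemma Ad_orthogonal: "orthogonal_matrix h \<Longrightarrow> Ad h X = h ** X ** transpose h"
  by (simp add: Ad_def orthogonal_matrix_inv)

lemma SO3_orthogonal: "h \<in> SO3 \<Longrightarrow> orthogonal_matrix h"
  by (simp add: SO3_def)

lemma Ad_SO3_so5: "h \<in> SO3 \<Longrightarrow> X \<in> so5 \<Longrightarrow> Ad h X \<in> so5"
  by (simp add: Ad_orthogonal SO3_orthogonal so5_def skew_conj_transpose)

lemma edual_1_Ad_SO3:
  assumes "h \<in> SO3"
  shows "edual 1 (Ad h X) = edual 1 X"
proof -
  have "orthogonal_matrix h" "h *v axis 0 1 = axis 0 1" "h *v axis 1 1 = axis 1 1"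
    using assms by (simp_all add: SO3_def)
  then show ?thesis
    unfolding edual_1 by (simp add: Ad_orthogonal orthogonal_conj_fixed_entry)
qed

lemma sign_flip_SO3:
  assumes "p \<noteq> q" "p \<notin> {0, 1}" "q \<notin> {0, 1}"
  shows "sign_flip p q \<in> SO3"
  using assms
  by (auto simp: SO3_def orthogonal_sign_flip det_sign_flip sign_flip_fixes_axis)

lemma Ad_sign_flip_nth:
  "Ad (sign_flip p q) X $ i $ j = flip_sign p q i * X $ i $ j * flip_sign p q j"
  by (simp add: Ad_orthogonal orthogonal_sign_flip sign_flip_mult_left_nth
      sign_flip_mult_right_nth)

lemma so5_sign_flip_average:
  assumes "X \<in> so5"
  shows "X + Ad (sign_flip 2 3) X + Ad (sign_flip 3 4) X + Ad (sign_flip 2 4) X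
    = (4 * edual 1 X) *\<^sub>R ebas 1"
proof -
  have "(X + Ad (sign_flip 2 3) X + Ad (sign_flip 3 4) X + Ad (sign_flip 2 4) X) $ i $ j
      = ((4 * edual 1 X) *\<^sub>R ebas 1) $ i $ j" for i j
    using exhaust_5[of i] exhaust_5[of j] so5_skew_nth[OF assms, of 0 1]
    unfolding edual_1 ebas_1
    by (elim disjE) (simp_all add: Ad_sign_flip_nth flip_sign_def so5_diag_nth[OF assms])
  then show ?thesis
    by (simp add: vec_eq_iff)
qed

lemma Ad_invariant_eq_edual_1:
  assumes lin: "linear_on_so5 \<alpha>"
    and inv: "\<forall>h\<in>SO3. \<forall>X\<in>so5. \<alpha> (Ad h X) = \<alpha> X"
    and X: "X \<in> so5"
  shows "\<alpha> X = \<alpha> (ebas 1) * edual 1 X"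
proof -
  let ?A = "\<lambda>p q. Ad (sign_flip p q) X"
  have flips: "sign_flip 2 3 \<in> SO3" "sign_flip 3 4 \<in> SO3" "sign_flip 2 4 \<in> SO3"
    by (simp_all add: sign_flip_SO3)
  then have A: "?A 2 3 \<in> so5" "?A 3 4 \<in> so5" "?A 2 4 \<in> so5"
    using X by (simp_all add: Ad_SO3_so5)
  have add: "\<alpha> (Y + Z) = \<alpha> Y + \<alpha> Z" if "Y \<in> so5" "Z \<in> so5" for Y Z
    using lin that by (simp add: linear_on_so5_def)
  have "4 * \<alpha> X = \<alpha> X + \<alpha> (?A 2 3) + \<alpha> (?A 3 4) + \<alpha> (?A 2 4)"
    using inv flips X by simp
  also have "\<dots> = \<alpha> (X + ?A 2 3 + ?A 3 4 + ?A 2 4)"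
    using A X subspace_add[OF subspace_so5] by (simp add: add)
  also have "\<dots> = \<alpha> ((4 * edual 1 X) *\<^sub>R ebas 1)"
    by (simp only: so5_sign_flip_average[OF X])
  also have "\<dots> = 4 * edual 1 X * \<alpha> (ebas 1)"
    using lin ebas_1_so5 by (simp add: linear_on_so5_def)
  finally show ?thesis
    by simp
qed

lemma hh_subset_ker_edual_1: "hh \<subseteq> {X \<in> so5. edual 1 X = 0}"
proof -
  have "subspace {X::real^5^5. X $ 0 $ 1 = 0}"
    by (simp add: subspace_def)
  then have "subspace {X \<in> so5. edual 1 X = 0}"
    unfolding edual_1 using subspace_inter[OF subspace_so5] by (simp add: Collect_conj_eq)
  then show ?thesis
    unfolding hh_def
    by (rule span_minimal[rotated])
      (auto simp: edual_def ebas_def Emat_def so5_def transpose_def vec_eq_iff)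
qed

lemma inv_conn_if_multiple_edual_1:
  assumes "\<forall>X\<in>so5. \<alpha> X = a * edual 1 X"
  shows "inv_conn \<alpha>"
  using assms hh_subset_ker_edual_1 Ad_SO3_so5 edual_1_Ad_SO3 unfolding inv_conn_def by auto

lemma edual_1_brk:
  assumes "X \<in> so5" "Y \<in> so5"
  shows "edual 1 (brk X Y) = - omega X Y"
proof -
  have "edual 1 (brk X Y) = (\<Sum>k\<in>UNIV. X $ 0 $ k * Y $ k $ 1) - (\<Sum>k\<in>UNIV. Y $ 0 $ k * X $ k $ 1)"
    unfolding edual_1 brk_def by (simp add: matrix_matrix_mult_def)
  also have "\<dots> = - omega X Y"
    using assms[THEN so5_skew_nth, of 2 1] assms[THEN so5_skew_nth, of 3 1]
      assms[THEN so5_skew_nth, of 4 1]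
    unfolding sum_5 omega_def wedge_def
    by (simp add: edual_def so5_diag_nth assms algebra_simps)
  finally show ?thesis .
qed

lemma curv_eq_multiple_omega:
  assumes "\<forall>X\<in>so5. \<alpha> X = a * edual 1 X" "X \<in> so5" "Y \<in> so5"
  shows "curv \<alpha> X Y = a * omega X Y"
  using assms brk_so5 edual_1_brk by (simp add: curv_def u1_brk_def)

theorem lemma4p5:
  fixes \<alpha> :: "real^5^5 \<Rightarrow> real"
  assumes "linear_on_so5 \<alpha>"
  shows "(inv_conn \<alpha> \<longleftrightarrow> (\<exists>a1::real. \<forall>X\<in>so5. \<alpha> X = a1 * edual 1 X))
       \<and> (inv_conn \<alpha> \<longrightarrow> (\<exists>f::real. \<forall>X\<in>mm. \<forall>Y\<in>mm. curv \<alpha> X Y = f * omega X Y))"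
proof -
  have form: "\<exists>a1. \<forall>X\<in>so5. \<alpha> X = a1 * edual 1 X" if "inv_conn \<alpha>"
    using Ad_invariant_eq_edual_1[OF assms] that unfolding inv_conn_def by blast
  moreover have "\<exists>f. \<forall>X\<in>mm. \<forall>Y\<in>mm. curv \<alpha> X Y = f * omega X Y" if "inv_conn \<alpha>"
    using form[OF that] curv_eq_multiple_omega mm_subset_so5 by blast
  ultimately show ?thesis
    using inv_conn_if_multiple_edual_1 by blast
qed

end
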